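(* Let $n=2$, $D_0>0$, $\alpha>\beta>0$, and $\gamma_1,\gamma_2\in(0,1)$. Assume the matrix $H$ with $H_{ii}=\gamma_i$ and $H_{12}=H_{21}=-(\beta/\alpha)(\gamma_1+\gamma_2)/2$ is positive definite. Let $p^a_1\ge p^a_2\ge0$, and put $$D_0'=D_0(\alpha+\beta)/\alpha,\qquad \alpha'=(\alpha^2-\beta^2)/\alpha.$$ In the two-CP ex post regulation game described below: - If $$p^a_1\ \ge\ \frac{2\alpha}{\beta}\,p^a_2+\frac{(2\alpha-\beta)D_0}{\beta(\alpha-\beta)},$$ then there exists a pure-strategy Nash equilibrium with $d_1>0$ and $d_2=0$, and every pure-strategy Nash equilibrium is of this kind. Every such equilibrium satisfies: - $p^s_1+p^c_1=\frac{D_0'-\alpha'p^a_1}{2\alpha'}$, with $p^s_1$ (or $p^c_1$) otherwise free; - $d_1=\frac{D_0'+\alpha'p^a_1}{2}$; - the net revenue per unit demand $p^s_1+p^c_1+p^a_1=\frac{D_0'+\alpha'p^a_1}{2\alpha'}$ is shared in proportions $\gamma_1$ and $1-\gamma_1$ by the ISP and CP 1. - If this inequality does not hold, there is no pure-strategy Nash equilibrium.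
   Context: Two-CP model with one ISP. Prices $p^s_1,p^s_2$ are chosen by the ISP, and $p^c_i$ by CP $i$; write $p_i=p^s_i+p^c_i$. Demands $d_i(p_1,p_2)$ are defined piecewise: 1. If $p_1<(D_0+\beta p_2)/\alpha$ and $p_2<(D_0+\beta p_1)/\alpha$: $d_1=D_0-\alpha p_1+\beta p_2$ and $d_2=D_0-\alpha p_2+\beta p_1$. 2. If $p_1<D_0/(\alpha-\beta)$ and $p_2\ge(D_0+\beta p_1)/\alpha$: $d_1=D_0-\alpha p_1+\beta(D_0+\beta p_1)/\alpha$ and $d_2=0$. 3. The case symmetric to case 2, with indices $1,2$ swapped. 4. If $p_1\ge D_0/(\alpha-\beta)$ and $p_2\ge D_0/(\alpha-\beta)$: $d_1=d_2=0$. $p^a_i\ge0$ is CP $i$'s advertising revenue per unit demand. Ex post regulation: after prices are set, a regulator sets the payment $p^d_i$ from CP $i$ to the ISP so that the revenue per unit demand $p_i+p^a_i$ from CP $i$'s content is split as $\gamma_i(p_i+p^a_i)$ to the ISP and $(1-\gamma_i)(p_i+p^a_i)$ to CP $i$. The resulting payoffs are $$U_{ISP}=\gamma_1d_1(p_1+p^a_1)+\gamma_2d_2(p_2+p^a_2),\qquad U_{CP,i}=(1-\gamma_i)d_i(p_i+p^a_i).$$ The ISP chooses $(p^s_1,p^s_2)\in\mathbb{R}^2$ and each CP $i$ chooses $p^c_i\in\mathbb{R}$, all simultaneously. *)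

theory Defs
  imports Complex_Main
begin

definition demand1 :: "real \<Rightarrow> real \<Rightarrow> real \<Rightarrow> real \<Rightarrow> real \<Rightarrow> real" where
  "demand1 D0 \<alpha> \<beta> p1 p2 =
     (if p1 < (D0 + \<beta> * p2) / \<alpha> \<and> p2 < (D0 + \<beta> * p1) / \<alpha>
        then D0 - \<alpha> * p1 + \<beta> * p2
      else if p1 < D0 / (\<alpha> - \<beta>) \<and> p2 \<ge> (D0 + \<beta> * p1) / \<alpha>
        then D0 - \<alpha> * p1 + \<beta> * (D0 + \<beta> * p1) / \<alpha>
      else if p2 < D0 / (\<alpha> - \<beta>) \<and> p1 \<ge> (D0 + \<beta> * p2) / \<alpha>
        then 0
      else 0)"

definition demand2 :: "real \<Rightarrow> real \<Rightarrow> real \<Rightarrow> real \<Rightarrow> real \<Rightarrow> real" where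
  "demand2 D0 \<alpha> \<beta> p1 p2 =
     (if p1 < (D0 + \<beta> * p2) / \<alpha> \<and> p2 < (D0 + \<beta> * p1) / \<alpha>
        then D0 - \<alpha> * p2 + \<beta> * p1
      else if p1 < D0 / (\<alpha> - \<beta>) \<and> p2 \<ge> (D0 + \<beta> * p1) / \<alpha>
        then 0
      else if p2 < D0 / (\<alpha> - \<beta>) \<and> p1 \<ge> (D0 + \<beta> * p2) / \<alpha>
        then D0 - \<alpha> * p2 + \<beta> * (D0 + \<beta> * p2) / \<alpha>
      else 0)"

definition U_ISP :: "real \<Rightarrow> real \<Rightarrow> real \<Rightarrow> real \<Rightarrow> real \<Rightarrow> real \<Rightarrow> real
                     \<Rightarrow> real \<Rightarrow> real \<Rightarrow> real \<Rightarrow> real \<Rightarrow> real" where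
  "U_ISP D0 \<alpha> \<beta> \<gamma>1 \<gamma>2 pa1 pa2 ps1 ps2 pc1 pc2 =
      \<gamma>1 * demand1 D0 \<alpha> \<beta> (ps1 + pc1) (ps2 + pc2) * (ps1 + pc1 + pa1)
    + \<gamma>2 * demand2 D0 \<alpha> \<beta> (ps1 + pc1) (ps2 + pc2) * (ps2 + pc2 + pa2)"

definition U_CP1 :: "real \<Rightarrow> real \<Rightarrow> real \<Rightarrow> real \<Rightarrow> real
                     \<Rightarrow> real \<Rightarrow> real \<Rightarrow> real \<Rightarrow> real \<Rightarrow> real" where
  "U_CP1 D0 \<alpha> \<beta> \<gamma>1 pa1 ps1 ps2 pc1 pc2 =
      (1 - \<gamma>1) * demand1 D0 \<alpha> \<beta> (ps1 + pc1) (ps2 + pc2) * (ps1 + pc1 + pa1)"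

definition U_CP2 :: "real \<Rightarrow> real \<Rightarrow> real \<Rightarrow> real \<Rightarrow> real
                     \<Rightarrow> real \<Rightarrow> real \<Rightarrow> real \<Rightarrow> real \<Rightarrow> real" where
  "U_CP2 D0 \<alpha> \<beta> \<gamma>2 pa2 ps1 ps2 pc1 pc2 =
      (1 - \<gamma>2) * demand2 D0 \<alpha> \<beta> (ps1 + pc1) (ps2 + pc2) * (ps2 + pc2 + pa2)"

definition is_NE :: "real \<Rightarrow> real \<Rightarrow> real \<Rightarrow> real \<Rightarrow> real \<Rightarrow> real \<Rightarrow> real
                     \<Rightarrow> real \<Rightarrow> real \<Rightarrow> real \<Rightarrow> real \<Rightarrow> bool" where
  "is_NE D0 \<alpha> \<beta> \<gamma>1 \<gamma>2 pa1 pa2 ps1 ps2 pc1 pc2 \<longleftrightarrow>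
     (\<forall>qs1 qs2. U_ISP D0 \<alpha> \<beta> \<gamma>1 \<gamma>2 pa1 pa2 qs1 qs2 pc1 pc2
                \<le> U_ISP D0 \<alpha> \<beta> \<gamma>1 \<gamma>2 pa1 pa2 ps1 ps2 pc1 pc2) \<and>
     (\<forall>qc1. U_CP1 D0 \<alpha> \<beta> \<gamma>1 pa1 ps1 ps2 qc1 pc2 \<le> U_CP1 D0 \<alpha> \<beta> \<gamma>1 pa1 ps1 ps2 pc1 pc2) \<and>
     (\<forall>qc2. U_CP2 D0 \<alpha> \<beta> \<gamma>2 pa2 ps1 ps2 pc1 qc2 \<le> U_CP2 D0 \<alpha> \<beta> \<gamma>2 pa2 ps1 ps2 pc1 pc2)"

definition posdef2 :: "real \<Rightarrow> real \<Rightarrow> real \<Rightarrow> bool" where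
  "posdef2 h11 h12 h22 \<longleftrightarrow>
     (\<forall>x1 x2. (x1, x2) \<noteq> (0, 0) \<longrightarrow> h11 * x1^2 + 2 * h12 * x1 * x2 + h22 * x2^2 > 0)"

end

theory Submission
  imports Defs
begin

text \<open>
  In terms of the total prices \<open>p1 = ps1 + pc1\<close>, \<open>p2 = ps2 + pc2\<close> the ISP maximises
  \<open>\<gamma>1 d1 (p1 + pa1) + \<gamma>2 d2 (p2 + pa2)\<close> over \<open>(p1, p2)\<close> and CP \<open>i\<close> maximises \<open>di (pi + pai)\<close> over
  \<open>pi\<close>. If both CPs are active, the first-order conditions of the three players are incompatible;
  if neither is, the ISP gains by deviating. If only CP \<open>i\<close> is active, its demand is the monopoly
  demand \<open>(\<alpha> + \<beta>) (D0 - (\<alpha> - \<beta>) pi) / \<alpha>\<close>, so the ISP forces \<open>pi\<close> to the monopoly price \<open>Pi\<close>, and the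
  other CP \<open>j\<close> stays out iff the choke price \<open>(D0 + \<beta> Pi) / \<alpha>\<close> satisfies \<open>(D0 + \<beta> Pi) / \<alpha> + paj \<le> 0\<close>.
  For \<open>i = 2\<close> this fails since \<open>pa1 \<ge> pa2 \<ge> 0\<close>; for \<open>i = 1\<close> it is the threshold condition.
  Conversely, in that configuration CP 1 earns the global maximum of its monopoly revenue, CP 2 could
  only enter at a negative margin, and the ISP payoff is bounded by a concave quadratic (concave
  because \<open>H\<close> is positive definite) on a half-plane, maximised at a boundary point where its
  gradient is an outward normal.
\<close>

lemma linear_coeff_zero_at_local_max:
  fixes k a d :: real
  assumes "0 < d" and "\<forall>h. \<bar>h\<bar> < d \<longrightarrow> k * h - a * h\<^sup>2 \<le> 0"
  shows "k = 0"
proof -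
  have "((\<lambda>h. k * h - a * h\<^sup>2) has_real_derivative k) (at 0)"
    by (auto intro!: derivative_eq_intros)
  then show ?thesis
    by (rule DERIV_local_max[OF _ assms(1)]) (use assms(2) in auto)
qed

lemma posdef2_nonneg: "posdef2 a b c \<Longrightarrow> 0 \<le> a * x\<^sup>2 + 2 * b * x * y + c * y\<^sup>2"
  unfolding posdef2_def by (cases "(x, y) = (0, 0)") (auto intro: less_imp_le)

locale linear_demand =
  fixes D0 \<alpha> \<beta> :: real
  assumes D0_pos: "0 < D0" and beta_pos: "0 < \<beta>" and beta_less_alpha: "\<beta> < \<alpha>"
begin

lemma alpha_pos: "0 < \<alpha>"
  using beta_pos beta_less_alpha by linarith

abbreviation "d1 \<equiv> demand1 D0 \<alpha> \<beta>"
abbreviation "d2 \<equiv> demand2 D0 \<alpha> \<beta>"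

definition choke_price :: "real \<Rightarrow> real" where
  "choke_price p = (D0 + \<beta> * p) / \<alpha>"

lemma alpha_mult_choke_price: "\<alpha> * choke_price p = D0 + \<beta> * p"
  using alpha_pos by (simp add: choke_price_def)

lemma less_choke_price_iff: "q < choke_price p \<longleftrightarrow> \<alpha> * q < D0 + \<beta> * p"
  using alpha_pos by (simp add: choke_price_def pos_less_divide_eq mult.commute)

lemma choke_price_le_iff: "choke_price p \<le> q \<longleftrightarrow> D0 + \<beta> * p \<le> \<alpha> * q"
  using less_choke_price_iff[of q p] by linarith

definition monopoly_demand :: "real \<Rightarrow> real" where
  "monopoly_demand p = (\<alpha> + \<beta>) * (D0 - (\<alpha> - \<beta>) * p) / \<alpha>"

lemma shared_demand_at_choke: "D0 - \<alpha> * p + \<beta> * choke_price p = monopoly_demand p"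
  using alpha_pos by (simp add: choke_price_def monopoly_demand_def field_simps)

lemma alpha_mult_monopoly_demand: "\<alpha> * monopoly_demand p = (\<alpha> + \<beta>) * (D0 - (\<alpha> - \<beta>) * p)"
  using alpha_pos by (simp add: monopoly_demand_def)

lemma monopoly_demand_pos_iff: "0 < monopoly_demand p \<longleftrightarrow> (\<alpha> - \<beta>) * p < D0"
  using alpha_pos beta_pos by (simp add: monopoly_demand_def zero_less_mult_iff zero_less_divide_iff)

lemma demand1_eq:
  "d1 p1 p2 =
     (if \<alpha> * p1 < D0 + \<beta> * p2 \<and> \<alpha> * p2 < D0 + \<beta> * p1 then D0 - \<alpha> * p1 + \<beta> * p2
      else if (\<alpha> - \<beta>) * p1 < D0 \<and> D0 + \<beta> * p1 \<le> \<alpha> * p2 then monopoly_demand p1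
      else 0)"
proof -
  have "D0 - \<alpha> * p1 + \<beta> * (D0 + \<beta> * p1) / \<alpha> = monopoly_demand p1"
    using shared_demand_at_choke[of p1] by (simp add: choke_price_def)
  then show ?thesis
    using alpha_pos beta_less_alpha
    by (simp add: demand1_def pos_less_divide_eq pos_divide_le_eq mult.commute)
qed

lemma below_choke_if_monopoly:
  assumes "(\<alpha> - \<beta>) * p1 < D0" and "D0 + \<beta> * p1 \<le> \<alpha> * p2"
  shows "\<alpha> * p1 < D0 + \<beta> * p2"
proof -
  have "\<alpha> * (\<alpha> * p1) < \<alpha> * D0 + \<beta> * (D0 + \<beta> * p1)"
    using mult_strict_left_mono[OF assms(1), of "\<alpha> + \<beta>"] alpha_pos beta_pos
    by (simp add: algebra_simps power2_eq_square)
  also have "\<dots> \<le> \<alpha> * (D0 + \<beta> * p2)"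
    using mult_left_mono[OF assms(2), of \<beta>] beta_pos by (simp add: algebra_simps)
  finally show ?thesis
    using alpha_pos by simp
qed

lemma demand2_eq_demand1: "d2 p1 p2 = d1 p2 p1"
  using below_choke_if_monopoly[of p1 p2] alpha_pos beta_less_alpha
  unfolding demand1_eq
  by (auto simp: demand2_def pos_less_divide_eq pos_divide_le_eq mult.commute monopoly_demand_def field_simps)

lemma demand1_shared:
  "\<alpha> * p1 < D0 + \<beta> * p2 \<Longrightarrow> \<alpha> * p2 < D0 + \<beta> * p1 \<Longrightarrow> d1 p1 p2 = D0 - \<alpha> * p1 + \<beta> * p2"
  by (simp add: demand1_eq)

lemma demand1_monopoly:
  "(\<alpha> - \<beta>) * p1 < D0 \<Longrightarrow> D0 + \<beta> * p1 \<le> \<alpha> * p2 \<Longrightarrow> d1 p1 p2 = monopoly_demand p1"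
  by (simp add: demand1_eq)

lemma demand1_zero:
  "\<not> (\<alpha> * p1 < D0 + \<beta> * p2 \<and> \<alpha> * p2 < D0 + \<beta> * p1) \<Longrightarrow>
   \<not> ((\<alpha> - \<beta>) * p1 < D0 \<and> D0 + \<beta> * p1 \<le> \<alpha> * p2) \<Longrightarrow> d1 p1 p2 = 0"
  by (auto simp: demand1_eq)

lemma demand1_zero_above_choke: "D0 + \<beta> * p2 \<le> \<alpha> * p1 \<Longrightarrow> d1 p1 p2 = 0"
  using below_choke_if_monopoly[of p1 p2] by (auto simp: demand1_eq)

lemma demand1_nonneg: "0 \<le> d1 p1 p2"
  using monopoly_demand_pos_iff[of p1] by (auto simp: demand1_eq)

lemma demand1_pos_imp_below_choke: "0 < d1 p1 p2 \<Longrightarrow> \<alpha> * p1 < D0 + \<beta> * p2"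
  using demand1_zero_above_choke[of p2 p1] by fastforce

lemma demand1_le_monopoly_demand: "0 < d1 p1 p2 \<Longrightarrow> d1 p1 p2 \<le> monopoly_demand p1"
proof -
  have "D0 - \<alpha> * p1 + \<beta> * p2 \<le> monopoly_demand p1" if "\<alpha> * p2 < D0 + \<beta> * p1"
  proof -
    have "\<beta> * (\<alpha> * p2) \<le> \<beta> * (D0 + \<beta> * p1)"
      using that beta_pos by simp
    then have "\<alpha> * (D0 - \<alpha> * p1 + \<beta> * p2) \<le> \<alpha> * monopoly_demand p1"
      by (simp add: alpha_mult_monopoly_demand algebra_simps)
    then show ?thesis
      using alpha_pos by simp
  qed
  then show "0 < d1 p1 p2 \<Longrightarrow> d1 p1 p2 \<le> monopoly_demand p1"
    by (auto simp: demand1_eq split: if_splits)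
qed

lemma demand1_pos:
  assumes "\<alpha> * p1 < D0 + \<beta> * p2" and "(\<alpha> - \<beta>) * p2 < D0"
  shows "0 < d1 p1 p2"
proof (cases "\<alpha> * p2 < D0 + \<beta> * p1")
  case True
  then show ?thesis using assms(1) by (simp add: demand1_shared)
next
  case False
  have "\<alpha> * ((\<alpha> - \<beta>) * p1) < (\<alpha> - \<beta>) * D0 + \<beta> * ((\<alpha> - \<beta>) * p2)"
    using mult_strict_left_mono[OF assms(1), of "\<alpha> - \<beta>"] beta_less_alpha by (simp add: algebra_simps)
  also have "\<dots> < \<alpha> * D0"
    using mult_strict_left_mono[OF assms(2) beta_pos] by (simp add: algebra_simps)
  finally have "(\<alpha> - \<beta>) * p1 < D0"
    using alpha_pos by simp
  then show ?thesis
    using False by (simp add: demand1_monopoly monopoly_demand_pos_iff)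
qed

lemma demand_regions:
  obtains (shared) "\<alpha> * p1 < D0 + \<beta> * p2" "\<alpha> * p2 < D0 + \<beta> * p1"
    | (monopoly1) "(\<alpha> - \<beta>) * p1 < D0" "choke_price p1 \<le> p2"
    | (monopoly2) "(\<alpha> - \<beta>) * p2 < D0" "choke_price p2 \<le> p1"
    | (none) "d1 p1 p2 = 0" "d2 p1 p2 = 0"
  using demand1_zero[of p1 p2] demand1_zero[of p2 p1]
  by (auto simp: choke_price_le_iff demand2_eq_demand1)

definition monopoly_price :: "real \<Rightarrow> real" where
  "monopoly_price pa = D0 / (2 * (\<alpha> - \<beta>)) - pa / 2"

definition monopoly_revenue :: "real \<Rightarrow> real \<Rightarrow> real" where
  "monopoly_revenue pa p = monopoly_demand p * (p + pa)"

lemma monopoly_price_eq: "2 * (\<alpha> - \<beta>) * monopoly_price pa = D0 - (\<alpha> - \<beta>) * pa"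
  using beta_less_alpha by (simp add: monopoly_price_def field_simps)

lemma monopoly_revenue_gap:
  "monopoly_revenue pa (monopoly_price pa) - monopoly_revenue pa p
     = (\<alpha> + \<beta>) * (\<alpha> - \<beta>) / \<alpha> * (p - monopoly_price pa)\<^sup>2"
proof -
  let ?P = "monopoly_price pa"
  let ?G = "\<lambda>q. (D0 - (\<alpha> - \<beta>) * q) * (q + pa)"
  have "?G ?P - ?G p = (D0 - (\<alpha> - \<beta>) * pa - 2 * (\<alpha> - \<beta>) * ?P) * (?P - p) + (\<alpha> - \<beta>) * (p - ?P)\<^sup>2"
    by (simp add: algebra_simps power2_eq_square)
  then have gap: "?G ?P - ?G p = (\<alpha> - \<beta>) * (p - ?P)\<^sup>2"
    by (simp only: monopoly_price_eq diff_self mult_zero_left add_0)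
  have revenue: "monopoly_revenue pa q = (\<alpha> + \<beta>) / \<alpha> * ?G q" for q
    by (simp add: monopoly_revenue_def monopoly_demand_def)
  have "monopoly_revenue pa ?P - monopoly_revenue pa p = (\<alpha> + \<beta>) / \<alpha> * (?G ?P - ?G p)"
    by (simp only: revenue right_diff_distrib)
  also have "\<dots> = (\<alpha> + \<beta>) * (\<alpha> - \<beta>) / \<alpha> * (p - ?P)\<^sup>2"
    unfolding gap by simp
  finally show ?thesis .
qed

lemma monopoly_revenue_gap_coeff_pos: "0 < (\<alpha> + \<beta>) * (\<alpha> - \<beta>) / \<alpha>"
  using alpha_pos beta_pos beta_less_alpha by simp

lemma monopoly_revenue_le_max: "monopoly_revenue pa p \<le> monopoly_revenue pa (monopoly_price pa)"
  using monopoly_revenue_gap[of pa p] monopoly_revenue_gap_coeff_pos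
  by (smt (verit) mult_nonneg_nonneg zero_le_power2)

lemma eq_monopoly_price_if_revenue_ge:
  "monopoly_revenue pa (monopoly_price pa) \<le> monopoly_revenue pa p \<Longrightarrow> p = monopoly_price pa"
  using monopoly_revenue_gap[of pa p] monopoly_revenue_gap_coeff_pos
  by (smt (verit) mult_pos_pos power2_eq_square zero_less_mult_iff)

lemma monopoly_revenue_max_nonneg: "0 \<le> monopoly_revenue pa (monopoly_price pa)"
  using monopoly_revenue_le_max[of pa "- pa"] by (simp add: monopoly_revenue_def)

lemma revenue1_le_monopoly_max: "d1 q p2 * (q + pa) \<le> monopoly_revenue pa (monopoly_price pa)"
proof (cases "0 < d1 q p2 \<and> 0 \<le> q + pa")
  case True
  then have "d1 q p2 * (q + pa) \<le> monopoly_revenue pa q"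
    using demand1_le_monopoly_demand by (simp add: monopoly_revenue_def mult_right_mono)
  then show ?thesis
    using monopoly_revenue_le_max order_trans by blast
next
  case False
  then have "d1 q p2 * (q + pa) \<le> 0"
    using demand1_nonneg[of q p2] by (auto simp: mult_le_0_iff)
  then show ?thesis
    using monopoly_revenue_max_nonneg order_trans by blast
qed

lemma monopoly_price_below_capacity: "0 \<le> pa \<Longrightarrow> (\<alpha> - \<beta>) * monopoly_price pa < D0"
  using monopoly_price_eq[of pa] mult_nonneg_nonneg[of "\<alpha> - \<beta>" pa] beta_less_alpha D0_pos
  by linarith

lemma monopoly_price_plus_pos:
  assumes "0 \<le> pa"
  shows "0 < monopoly_price pa + pa"
proof -
  have "2 * (\<alpha> - \<beta>) * (monopoly_price pa + pa) = D0 + (\<alpha> - \<beta>) * pa"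
    using monopoly_price_eq[of pa] by (simp add: algebra_simps)
  then show ?thesis
    using assms D0_pos beta_less_alpha by (smt (verit) mult_nonneg_nonneg zero_less_mult_iff)
qed

lemma monopoly_revenue_max_pos:
  "0 \<le> pa \<Longrightarrow> 0 < monopoly_revenue pa (monopoly_price pa)"
  using monopoly_price_below_capacity monopoly_price_plus_pos
  by (simp add: monopoly_revenue_def monopoly_demand_pos_iff)

lemma choke_monopoly_price_plus_pos:
  assumes "0 \<le> pa"
  shows "0 < choke_price (monopoly_price pa) + pa"
proof -
  let ?P = "monopoly_price pa"
  have "\<alpha> * (choke_price ?P + pa) = D0 + \<beta> * (?P + pa) + (\<alpha> - \<beta>) * pa"
    by (simp add: distrib_left alpha_mult_choke_price algebra_simps)
  also have "\<dots> > 0"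
    using D0_pos mult_pos_pos[OF beta_pos monopoly_price_plus_pos[OF assms]]
      mult_nonneg_nonneg[of "\<alpha> - \<beta>" pa] beta_less_alpha assms by linarith
  finally show ?thesis
    using alpha_pos by (simp add: zero_less_mult_iff)
qed

definition isp_payoff :: "real \<Rightarrow> real \<Rightarrow> real \<Rightarrow> real \<Rightarrow> real \<Rightarrow> real \<Rightarrow> real" where
  "isp_payoff \<gamma>1 \<gamma>2 pa1 pa2 p1 p2 = \<gamma>1 * d1 p1 p2 * (p1 + pa1) + \<gamma>2 * d2 p1 p2 * (p2 + pa2)"

definition price_equilibrium :: "real \<Rightarrow> real \<Rightarrow> real \<Rightarrow> real \<Rightarrow> real \<Rightarrow> real \<Rightarrow> bool" where
  "price_equilibrium \<gamma>1 \<gamma>2 pa1 pa2 p1 p2 \<longleftrightarrow>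
     (\<forall>q1 q2. isp_payoff \<gamma>1 \<gamma>2 pa1 pa2 q1 q2 \<le> isp_payoff \<gamma>1 \<gamma>2 pa1 pa2 p1 p2) \<and>
     (\<forall>q. d1 q p2 * (q + pa1) \<le> d1 p1 p2 * (p1 + pa1)) \<and>
     (\<forall>q. d2 p1 q * (q + pa2) \<le> d2 p1 p2 * (p2 + pa2))"

lemma is_NE_iff_price_equilibrium:
  assumes "\<gamma>1 < 1" and "\<gamma>2 < 1"
  shows "is_NE D0 \<alpha> \<beta> \<gamma>1 \<gamma>2 pa1 pa2 ps1 ps2 pc1 pc2 \<longleftrightarrow>
         price_equilibrium \<gamma>1 \<gamma>2 pa1 pa2 (ps1 + pc1) (ps2 + pc2)"
proof -
  have shift2: "(\<forall>x y. P (x + a) (y + b)) \<longleftrightarrow> (\<forall>x y. P x y)" for P :: "real \<Rightarrow> real \<Rightarrow> bool" and a b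
    by (metis diff_add_cancel)
  have shift1: "(\<forall>x. P (a + x)) \<longleftrightarrow> (\<forall>x. P x)" for P :: "real \<Rightarrow> bool" and a
    by (metis add_diff_cancel_left' diff_add_cancel add.commute)
  let ?W = "isp_payoff \<gamma>1 \<gamma>2 pa1 pa2"
  have "(\<forall>qs1 qs2. U_ISP D0 \<alpha> \<beta> \<gamma>1 \<gamma>2 pa1 pa2 qs1 qs2 pc1 pc2 \<le> U_ISP D0 \<alpha> \<beta> \<gamma>1 \<gamma>2 pa1 pa2 ps1 ps2 pc1 pc2)
        \<longleftrightarrow> (\<forall>q1 q2. ?W q1 q2 \<le> ?W (ps1 + pc1) (ps2 + pc2))"
    using shift2[of "\<lambda>q1 q2. ?W q1 q2 \<le> ?W (ps1 + pc1) (ps2 + pc2)" pc1 pc2]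
    by (simp add: U_ISP_def isp_payoff_def)
  moreover have "(\<forall>qc1. U_CP1 D0 \<alpha> \<beta> \<gamma>1 pa1 ps1 ps2 qc1 pc2 \<le> U_CP1 D0 \<alpha> \<beta> \<gamma>1 pa1 ps1 ps2 pc1 pc2)
        \<longleftrightarrow> (\<forall>q. d1 q (ps2 + pc2) * (q + pa1) \<le> d1 (ps1 + pc1) (ps2 + pc2) * (ps1 + pc1 + pa1))"
    using shift1[of "\<lambda>q. d1 q (ps2 + pc2) * (q + pa1) \<le> d1 (ps1 + pc1) (ps2 + pc2) * (ps1 + pc1 + pa1)" ps1]
      assms(1) by (simp add: U_CP1_def mult.assoc add.assoc)
  moreover have "(\<forall>qc2. U_CP2 D0 \<alpha> \<beta> \<gamma>2 pa2 ps1 ps2 pc1 qc2 \<le> U_CP2 D0 \<alpha> \<beta> \<gamma>2 pa2 ps1 ps2 pc1 pc2)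
        \<longleftrightarrow> (\<forall>q. d2 (ps1 + pc1) q * (q + pa2) \<le> d2 (ps1 + pc1) (ps2 + pc2) * (ps2 + pc2 + pa2))"
    using shift1[of "\<lambda>q. d2 (ps1 + pc1) q * (q + pa2) \<le> d2 (ps1 + pc1) (ps2 + pc2) * (ps2 + pc2 + pa2)" ps2]
      assms(2) by (simp add: U_CP2_def mult.assoc add.assoc)
  ultimately show ?thesis
    unfolding is_NE_def price_equilibrium_def by simp
qed

lemma isp_payoff_swap: "isp_payoff \<gamma>1 \<gamma>2 pa1 pa2 p1 p2 = isp_payoff \<gamma>2 \<gamma>1 pa2 pa1 p2 p1"
  by (simp add: isp_payoff_def demand2_eq_demand1)

lemma price_equilibrium_swap:
  "price_equilibrium \<gamma>1 \<gamma>2 pa1 pa2 p1 p2 \<Longrightarrow> price_equilibrium \<gamma>2 \<gamma>1 pa2 pa1 p2 p1"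
  unfolding price_equilibrium_def by (metis isp_payoff_swap demand2_eq_demand1)

lemma shared_region_open:
  assumes "\<alpha> * p1 < D0 + \<beta> * p2" and "\<alpha> * p2 < D0 + \<beta> * p1"
  obtains \<delta> where "0 < \<delta>"
    and "\<And>h. \<bar>h\<bar> < \<delta> \<Longrightarrow> \<alpha> * (p1 + h) < D0 + \<beta> * p2 \<and> \<alpha> * p2 < D0 + \<beta> * (p1 + h)"
proof
  let ?s = "min (D0 + \<beta> * p2 - \<alpha> * p1) (D0 + \<beta> * p1 - \<alpha> * p2)"
  show "0 < ?s / \<alpha>"
    using assms alpha_pos by simp
  fix h :: real
  assume "\<bar>h\<bar> < ?s / \<alpha>"
  then have "\<alpha> * \<bar>h\<bar> < ?s"
    using alpha_pos by (simp add: pos_less_divide_eq mult.commute)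
  moreover have "\<bar>\<alpha> * h\<bar> = \<alpha> * \<bar>h\<bar>" "\<bar>\<beta> * h\<bar> = \<beta> * \<bar>h\<bar>"
    using alpha_pos beta_pos by (simp_all add: abs_mult)
  moreover have "\<beta> * \<bar>h\<bar> \<le> \<alpha> * \<bar>h\<bar>"
    using beta_less_alpha by (simp add: mult_right_mono)
  ultimately show "\<alpha> * (p1 + h) < D0 + \<beta> * p2 \<and> \<alpha> * p2 < D0 + \<beta> * (p1 + h)"
    unfolding distrib_left by (smt (verit))
qed

lemma shared_first_order_conditions:
  assumes eq: "price_equilibrium \<gamma>1 \<gamma>2 pa1 pa2 p1 p2"
    and shared: "\<alpha> * p1 < D0 + \<beta> * p2" "\<alpha> * p2 < D0 + \<beta> * p1"
  defines "e1 \<equiv> D0 - \<alpha> * p1 + \<beta> * p2"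
  shows "e1 = \<alpha> * (p1 + pa1)" and "\<gamma>1 * (e1 - \<alpha> * (p1 + pa1)) + \<gamma>2 * \<beta> * (p2 + pa2) = 0"
proof -
  obtain \<delta> where "0 < \<delta>"
    and move: "\<And>h. \<bar>h\<bar> < \<delta> \<Longrightarrow> \<alpha> * (p1 + h) < D0 + \<beta> * p2 \<and> \<alpha> * p2 < D0 + \<beta> * (p1 + h)"
    using shared_region_open[OF shared] by blast
  define e2 where "e2 = D0 - \<alpha> * p2 + \<beta> * p1"
  have demand: "d1 p1 p2 = e1" "d2 p1 p2 = e2"
    using demand1_shared[OF shared] demand1_shared[of p2 p1] shared
    by (simp_all add: e1_def e2_def demand2_eq_demand1)
  have moved: "d1 (p1 + h) p2 = e1 - \<alpha> * h" "d2 (p1 + h) p2 = e2 + \<beta> * h" if "\<bar>h\<bar> < \<delta>" for h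
    using move[OF that] demand1_shared[of "p1 + h" p2] demand1_shared[of p2 "p1 + h"]
    by (simp_all add: e1_def e2_def demand2_eq_demand1 algebra_simps)
  have "e1 - \<alpha> * (p1 + pa1) = 0"
  proof (rule linear_coeff_zero_at_local_max[OF \<open>0 < \<delta>\<close>], intro allI impI)
    fix h assume "\<bar>h\<bar> < \<delta>"
    have "d1 (p1 + h) p2 * (p1 + h + pa1) \<le> d1 p1 p2 * (p1 + pa1)"
      using eq by (simp add: price_equilibrium_def)
    then have "(e1 - \<alpha> * h) * (p1 + h + pa1) \<le> e1 * (p1 + pa1)"
      using moved[OF \<open>\<bar>h\<bar> < \<delta>\<close>] demand by simp
    then show "(e1 - \<alpha> * (p1 + pa1)) * h - \<alpha> * h\<^sup>2 \<le> 0"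
      by (simp add: algebra_simps power2_eq_square)
  qed
  then show "e1 = \<alpha> * (p1 + pa1)"
    by simp
  show "\<gamma>1 * (e1 - \<alpha> * (p1 + pa1)) + \<gamma>2 * \<beta> * (p2 + pa2) = 0"
  proof (rule linear_coeff_zero_at_local_max[OF \<open>0 < \<delta>\<close>], intro allI impI)
    fix h assume "\<bar>h\<bar> < \<delta>"
    have "isp_payoff \<gamma>1 \<gamma>2 pa1 pa2 (p1 + h) p2 \<le> isp_payoff \<gamma>1 \<gamma>2 pa1 pa2 p1 p2"
      using eq by (simp add: price_equilibrium_def)
    then have "\<gamma>1 * (e1 - \<alpha> * h) * (p1 + h + pa1) + \<gamma>2 * (e2 + \<beta> * h) * (p2 + pa2)
               \<le> \<gamma>1 * e1 * (p1 + pa1) + \<gamma>2 * e2 * (p2 + pa2)"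
      using moved[OF \<open>\<bar>h\<bar> < \<delta>\<close>] demand by (simp add: isp_payoff_def)
    then show "(\<gamma>1 * (e1 - \<alpha> * (p1 + pa1)) + \<gamma>2 * \<beta> * (p2 + pa2)) * h - \<gamma>1 * \<alpha> * h\<^sup>2 \<le> 0"
      by (simp add: algebra_simps power2_eq_square)
  qed
qed

lemma no_price_equilibrium_shared:
  assumes eq: "price_equilibrium \<gamma>1 \<gamma>2 pa1 pa2 p1 p2" and "0 < \<gamma>2"
    and shared: "\<alpha> * p1 < D0 + \<beta> * p2" "\<alpha> * p2 < D0 + \<beta> * p1"
  shows False
proof -
  \<comment> \<open>CP 1's first-order condition turns the ISP's into \<open>\<gamma>2 \<beta> (p2 + pa2) = 0\<close>, and then CP 2's
      says that its demand vanishes.\<close>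
  have "p2 + pa2 = 0"
    using shared_first_order_conditions[OF eq shared] \<open>0 < \<gamma>2\<close> beta_pos by simp
  moreover have "D0 - \<alpha> * p2 + \<beta> * p1 = \<alpha> * (p2 + pa2)"
    using shared_first_order_conditions(1)[OF price_equilibrium_swap[OF eq] shared(2,1)] .
  ultimately show False
    using shared(2) by simp
qed

lemma isp_payoff_monopoly1:
  "(\<alpha> - \<beta>) * p1 < D0 \<Longrightarrow> choke_price p1 \<le> p2 \<Longrightarrow>
   isp_payoff \<gamma>1 \<gamma>2 pa1 pa2 p1 p2 = \<gamma>1 * monopoly_revenue pa1 p1"
  by (simp add: isp_payoff_def choke_price_le_iff demand1_monopoly demand2_eq_demand1
      demand1_zero_above_choke monopoly_revenue_def)

lemma price_equilibrium_isp_payoff_ge: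
  "price_equilibrium \<gamma>1 \<gamma>2 pa1 pa2 p1 p2 \<Longrightarrow> 0 \<le> pa1 \<Longrightarrow>
   \<gamma>1 * monopoly_revenue pa1 (monopoly_price pa1) \<le> isp_payoff \<gamma>1 \<gamma>2 pa1 pa2 p1 p2"
  unfolding price_equilibrium_def
  by (metis isp_payoff_monopoly1 monopoly_price_below_capacity order_refl)

lemma price_equilibrium_monopoly1:
  assumes eq: "price_equilibrium \<gamma>1 \<gamma>2 pa1 pa2 p1 p2" and "0 < \<gamma>1" and "0 \<le> pa1"
    and monopoly: "(\<alpha> - \<beta>) * p1 < D0" "choke_price p1 \<le> p2"
  shows "p1 = monopoly_price pa1 \<and> choke_price p1 + pa2 \<le> 0"
proof
  have "\<gamma>1 * monopoly_revenue pa1 (monopoly_price pa1) \<le> \<gamma>1 * monopoly_revenue pa1 p1"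
    using price_equilibrium_isp_payoff_ge[OF eq \<open>0 \<le> pa1\<close>] isp_payoff_monopoly1[OF monopoly] by simp
  then show "p1 = monopoly_price pa1"
    using \<open>0 < \<gamma>1\<close> by (simp add: eq_monopoly_price_if_revenue_ge)
  show "choke_price p1 + pa2 \<le> 0"
  proof (rule ccontr)
    assume "\<not> choke_price p1 + pa2 \<le> 0"
    define q where "q = (choke_price p1 - pa2) / 2"
    have "q < choke_price p1" and "0 < q + pa2"
      using \<open>\<not> choke_price p1 + pa2 \<le> 0\<close> by (simp_all add: q_def field_simps)
    then have "0 < d2 p1 q * (q + pa2)"
      using demand1_pos monopoly(1) by (simp add: demand2_eq_demand1 less_choke_price_iff)
    moreover have "d2 p1 p2 = 0"
      using monopoly(2) by (simp add: demand2_eq_demand1 choke_price_le_iff demand1_zero_above_choke)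
    moreover have "d2 p1 q * (q + pa2) \<le> d2 p1 p2 * (p2 + pa2)"
      using eq by (simp add: price_equilibrium_def)
    ultimately show False
      by simp
  qed
qed

definition shared_isp_payoff :: "real \<Rightarrow> real \<Rightarrow> real \<Rightarrow> real \<Rightarrow> real \<Rightarrow> real \<Rightarrow> real" where
  "shared_isp_payoff \<gamma>1 \<gamma>2 pa1 pa2 y1 y2 =
     \<gamma>1 * (D0 - \<alpha> * y1 + \<beta> * y2) * (y1 + pa1) + \<gamma>2 * (D0 - \<alpha> * y2 + \<beta> * y1) * (y2 + pa2)"

lemma shared_isp_payoff_at_choke:
  "shared_isp_payoff \<gamma>1 \<gamma>2 pa1 pa2 p (choke_price p) = \<gamma>1 * monopoly_revenue pa1 p"
  using shared_demand_at_choke[of p] alpha_mult_choke_price[of p]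
  by (simp add: shared_isp_payoff_def monopoly_revenue_def)

text \<open>On each monopoly region the ISP payoff is the shared-market formula evaluated with the inactive
  CP at its choke price, so every positive payoff is attained by that formula on a half-plane.\<close>

lemma isp_payoff_zero_or_shared:
  "isp_payoff \<gamma>1 \<gamma>2 pa1 pa2 q1 q2 = 0 \<or>
   (\<exists>y1 y2. \<alpha> * y2 \<le> D0 + \<beta> * y1 \<and> isp_payoff \<gamma>1 \<gamma>2 pa1 pa2 q1 q2 = shared_isp_payoff \<gamma>1 \<gamma>2 pa1 pa2 y1 y2)"
proof (cases rule: demand_regions[of q1 q2])
  case shared
  then have "isp_payoff \<gamma>1 \<gamma>2 pa1 pa2 q1 q2 = shared_isp_payoff \<gamma>1 \<gamma>2 pa1 pa2 q1 q2"
    using demand1_shared[of q1 q2] demand1_shared[of q2 q1]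
    by (simp add: isp_payoff_def shared_isp_payoff_def demand2_eq_demand1)
  then show ?thesis
    using shared by (auto intro: less_imp_le)
next
  case monopoly1
  then show ?thesis
    using isp_payoff_monopoly1 shared_isp_payoff_at_choke alpha_mult_choke_price
    by (metis order_refl)
next
  case monopoly2
  then have "isp_payoff \<gamma>1 \<gamma>2 pa1 pa2 q1 q2 = shared_isp_payoff \<gamma>1 \<gamma>2 pa1 pa2 (choke_price q2) q2"
    using isp_payoff_monopoly1[of q2 q1 \<gamma>2 \<gamma>1 pa2 pa1] shared_isp_payoff_at_choke[of \<gamma>2 \<gamma>1 pa2 pa1 q2]
    by (simp add: isp_payoff_swap shared_isp_payoff_def algebra_simps)
  moreover have "\<alpha> * q2 \<le> D0 + \<beta> * choke_price q2"
    using below_choke_if_monopoly[of q2 "choke_price q2"] monopoly2 alpha_mult_choke_price by simp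
  ultimately show ?thesis
    by blast
next
  case none
  then show ?thesis
    by (simp add: isp_payoff_def)
qed

lemma isp_curvature_nonneg:
  assumes "posdef2 \<gamma>1 (- (\<beta> / \<alpha>) * (\<gamma>1 + \<gamma>2) / 2) \<gamma>2"
  shows "0 \<le> \<alpha> * \<gamma>1 * u1\<^sup>2 - \<beta> * (\<gamma>1 + \<gamma>2) * u1 * u2 + \<alpha> * \<gamma>2 * u2\<^sup>2"
proof -
  have "\<alpha> * \<gamma>1 * u1\<^sup>2 - \<beta> * (\<gamma>1 + \<gamma>2) * u1 * u2 + \<alpha> * \<gamma>2 * u2\<^sup>2
        = \<alpha> * (\<gamma>1 * u1\<^sup>2 + 2 * (- (\<beta> / \<alpha>) * (\<gamma>1 + \<gamma>2) / 2) * u1 * u2 + \<gamma>2 * u2\<^sup>2)"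
    using alpha_pos by (simp add: field_simps)
  then show ?thesis
    using posdef2_nonneg[OF assms] alpha_pos by simp
qed

text \<open>The gradient \<open>(g1, g2)\<close> of the shared-market ISP payoff at \<open>(P, B)\<close> is an outward normal of the
  half-plane \<open>\<alpha> y2 \<le> D0 + \<beta> y1\<close>, on whose boundary \<open>(P, B)\<close> lies.\<close>

lemma isp_gradient_outward:
  assumes "0 < \<gamma>1" and "0 < \<gamma>2" and "0 \<le> pa1" and entry: "choke_price (monopoly_price pa1) + pa2 \<le> 0"
    and half_plane: "\<alpha> * y2 \<le> D0 + \<beta> * y1"
  defines "P \<equiv> monopoly_price pa1" and "B \<equiv> choke_price (monopoly_price pa1)"
  defines "g1 \<equiv> \<gamma>1 * (D0 - \<alpha> * P + \<beta> * B - \<alpha> * (P + pa1)) + \<gamma>2 * \<beta> * (B + pa2)"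
    and "g2 \<equiv> \<gamma>1 * \<beta> * (P + pa1) + \<gamma>2 * (D0 - \<alpha> * B + \<beta> * P - \<alpha> * (B + pa2))"
  shows "g1 * (y1 - P) + g2 * (y2 - B) \<le> 0"
proof -
  have hP: "2 * (\<alpha> - \<beta>) * P = D0 - (\<alpha> - \<beta>) * pa1" and hB: "\<alpha> * B = D0 + \<beta> * P"
    unfolding P_def B_def by (rule monopoly_price_eq, rule alpha_mult_choke_price)
  have "\<alpha> * g1 + \<beta> * g2 = \<gamma>1 * (\<alpha> + \<beta>) * (D0 - 2 * (\<alpha> - \<beta>) * P - (\<alpha> - \<beta>) * pa1)
                        + (\<gamma>2 - \<gamma>1) * \<beta> * (D0 - \<alpha> * B + \<beta> * P)"
    by (simp add: g1_def g2_def algebra_simps)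
  then have normal: "\<alpha> * g1 + \<beta> * g2 = 0"
    using hP hB by simp
  have "g2 = \<gamma>1 * \<beta> * (P + pa1) - \<gamma>2 * (\<alpha> * (B + pa2))"
    using hB by (simp add: g2_def algebra_simps)
  moreover have "\<alpha> * (B + pa2) \<le> 0"
    using entry alpha_pos by (simp add: B_def mult_nonneg_nonpos)
  moreover have "0 \<le> \<gamma>1 * \<beta> * (P + pa1)"
    using monopoly_price_plus_pos[OF \<open>0 \<le> pa1\<close>] \<open>0 < \<gamma>1\<close> beta_pos by (simp add: P_def)
  ultimately have outward: "0 \<le> g2"
    using mult_nonneg_nonpos[of \<gamma>2 "\<alpha> * (B + pa2)"] \<open>0 < \<gamma>2\<close> by linarith
  have "\<alpha> * (y2 - B) - \<beta> * (y1 - P) \<le> 0"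
    using half_plane hB by (simp add: algebra_simps)
  moreover have "\<alpha> * (g1 * (y1 - P) + g2 * (y2 - B))
                 = (\<alpha> * g1 + \<beta> * g2) * (y1 - P) + g2 * (\<alpha> * (y2 - B) - \<beta> * (y1 - P))"
    by (simp add: algebra_simps)
  ultimately have "\<alpha> * (g1 * (y1 - P) + g2 * (y2 - B)) \<le> 0"
    using normal outward by (simp add: mult_nonneg_nonpos)
  then show ?thesis
    using alpha_pos by (simp add: mult_le_0_iff)
qed

lemma shared_isp_payoff_le_at_monopoly:
  assumes "0 < \<gamma>1" and "0 < \<gamma>2" and pd: "posdef2 \<gamma>1 (- (\<beta> / \<alpha>) * (\<gamma>1 + \<gamma>2) / 2) \<gamma>2"
    and "0 \<le> pa1" and entry: "choke_price (monopoly_price pa1) + pa2 \<le> 0"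
    and half_plane: "\<alpha> * y2 \<le> D0 + \<beta> * y1"
  shows "shared_isp_payoff \<gamma>1 \<gamma>2 pa1 pa2 y1 y2
         \<le> shared_isp_payoff \<gamma>1 \<gamma>2 pa1 pa2 (monopoly_price pa1) (choke_price (monopoly_price pa1))"
    (is "_ \<le> shared_isp_payoff _ _ _ _ ?P ?B")
proof -
  let ?g1 = "\<gamma>1 * (D0 - \<alpha> * ?P + \<beta> * ?B - \<alpha> * (?P + pa1)) + \<gamma>2 * \<beta> * (?B + pa2)"
  let ?g2 = "\<gamma>1 * \<beta> * (?P + pa1) + \<gamma>2 * (D0 - \<alpha> * ?B + \<beta> * ?P - \<alpha> * (?B + pa2))"
  let ?u1 = "y1 - ?P" and ?u2 = "y2 - ?B"
  have "shared_isp_payoff \<gamma>1 \<gamma>2 pa1 pa2 y1 y2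
        = shared_isp_payoff \<gamma>1 \<gamma>2 pa1 pa2 ?P ?B + (?g1 * ?u1 + ?g2 * ?u2)
          - (\<alpha> * \<gamma>1 * ?u1\<^sup>2 - \<beta> * (\<gamma>1 + \<gamma>2) * ?u1 * ?u2 + \<alpha> * \<gamma>2 * ?u2\<^sup>2)"
    by (simp add: shared_isp_payoff_def algebra_simps power2_eq_square)
  then show ?thesis
    using isp_gradient_outward[OF assms(1,2,4,5) half_plane] isp_curvature_nonneg[OF pd, of ?u1 ?u2]
    by linarith
qed

lemma entry_threshold_iff:
  "pa1 \<ge> (2 * \<alpha> / \<beta>) * pa2 + (2 * \<alpha> - \<beta>) * D0 / (\<beta> * (\<alpha> - \<beta>)) \<longleftrightarrow>
   choke_price (monopoly_price pa1) + pa2 \<le> 0"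
proof -
  let ?P = "monopoly_price pa1"
  have c: "0 < \<beta> * (\<alpha> - \<beta>)"
    using beta_pos beta_less_alpha by simp
  have "(2 * \<alpha> / \<beta>) * pa2 + (2 * \<alpha> - \<beta>) * D0 / (\<beta> * (\<alpha> - \<beta>))
        = (2 * \<alpha> * (\<alpha> - \<beta>) * pa2 + (2 * \<alpha> - \<beta>) * D0) / (\<beta> * (\<alpha> - \<beta>))"
    using c beta_pos by (simp add: field_simps)
  then have "pa1 \<ge> (2 * \<alpha> / \<beta>) * pa2 + (2 * \<alpha> - \<beta>) * D0 / (\<beta> * (\<alpha> - \<beta>)) \<longleftrightarrow>
             2 * \<alpha> * (\<alpha> - \<beta>) * pa2 + (2 * \<alpha> - \<beta>) * D0 \<le> pa1 * (\<beta> * (\<alpha> - \<beta>))"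
    using c by (simp add: pos_divide_le_eq)
  moreover have "2 * (\<alpha> - \<beta>) * (\<alpha> * (choke_price ?P + pa2))
        = 2 * (\<alpha> - \<beta>) * D0 + \<beta> * (2 * (\<alpha> - \<beta>) * ?P) + 2 * \<alpha> * (\<alpha> - \<beta>) * pa2"
    by (simp add: distrib_left alpha_mult_choke_price algebra_simps)
  then have "2 * (\<alpha> - \<beta>) * (\<alpha> * (choke_price ?P + pa2))
        = (2 * \<alpha> - \<beta>) * D0 + 2 * \<alpha> * (\<alpha> - \<beta>) * pa2 - pa1 * (\<beta> * (\<alpha> - \<beta>))"
    unfolding monopoly_price_eq by (simp add: algebra_simps)
  moreover have "2 * (\<alpha> - \<beta>) * (\<alpha> * (choke_price ?P + pa2)) \<le> 0 \<longleftrightarrow> choke_price ?P + pa2 \<le> 0"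
    using alpha_pos beta_less_alpha by (simp add: mult_le_0_iff)
  ultimately show ?thesis
    by linarith
qed

lemma diff_squares_div_alpha: "(\<alpha>\<^sup>2 - \<beta>\<^sup>2) / \<alpha> = (\<alpha> + \<beta>) / \<alpha> * (\<alpha> - \<beta>)"
  using alpha_pos by (simp add: field_simps power2_eq_square)

lemma monopoly_price_closed_form:
  "monopoly_price pa = (D0 * (\<alpha> + \<beta>) / \<alpha> - (\<alpha>\<^sup>2 - \<beta>\<^sup>2) / \<alpha> * pa) / (2 * ((\<alpha>\<^sup>2 - \<beta>\<^sup>2) / \<alpha>))"
proof -
  have "2 * ((\<alpha>\<^sup>2 - \<beta>\<^sup>2) / \<alpha>) * monopoly_price pa = (\<alpha> + \<beta>) / \<alpha> * (2 * (\<alpha> - \<beta>) * monopoly_price pa)"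
    unfolding diff_squares_div_alpha by simp
  also have "\<dots> = D0 * (\<alpha> + \<beta>) / \<alpha> - (\<alpha>\<^sup>2 - \<beta>\<^sup>2) / \<alpha> * pa"
    unfolding monopoly_price_eq diff_squares_div_alpha using alpha_pos by (simp add: field_simps)
  finally have "2 * ((\<alpha>\<^sup>2 - \<beta>\<^sup>2) / \<alpha>) * monopoly_price pa = D0 * (\<alpha> + \<beta>) / \<alpha> - (\<alpha>\<^sup>2 - \<beta>\<^sup>2) / \<alpha> * pa" .
  moreover have "0 < 2 * ((\<alpha>\<^sup>2 - \<beta>\<^sup>2) / \<alpha>)"
    unfolding diff_squares_div_alpha using alpha_pos beta_pos beta_less_alpha by simp
  ultimately show ?thesis
    by (metis eq_divide_imp less_irrefl mult.commute)
qed

lemma monopoly_price_plus_closed_form: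
  "monopoly_price pa + pa = (D0 * (\<alpha> + \<beta>) / \<alpha> + (\<alpha>\<^sup>2 - \<beta>\<^sup>2) / \<alpha> * pa) / (2 * ((\<alpha>\<^sup>2 - \<beta>\<^sup>2) / \<alpha>))"
proof -
  have shift: "(a - c * x) / (2 * c) + x = (a + c * x) / (2 * c)" if "c \<noteq> 0" for a c x :: real
    using that by (simp add: field_simps)
  have "(\<alpha>\<^sup>2 - \<beta>\<^sup>2) / \<alpha> \<noteq> 0"
    unfolding diff_squares_div_alpha using alpha_pos beta_pos beta_less_alpha by simp
  then show ?thesis
    unfolding monopoly_price_closed_form by (rule shift)
qed

lemma monopoly_demand_at_monopoly_price:
  "monopoly_demand (monopoly_price pa) = (D0 * (\<alpha> + \<beta>) / \<alpha> + (\<alpha>\<^sup>2 - \<beta>\<^sup>2) / \<alpha> * pa) / 2"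
proof -
  have "D0 - (\<alpha> - \<beta>) * monopoly_price pa = (\<alpha> - \<beta>) * (monopoly_price pa + pa)"
    using monopoly_price_eq[of pa] by (simp add: algebra_simps)
  then have "monopoly_demand (monopoly_price pa) = (\<alpha>\<^sup>2 - \<beta>\<^sup>2) / \<alpha> * (monopoly_price pa + pa)"
    by (simp add: monopoly_demand_def diff_squares_div_alpha)
  also have "\<dots> = (D0 * (\<alpha> + \<beta>) / \<alpha> + (\<alpha>\<^sup>2 - \<beta>\<^sup>2) / \<alpha> * pa) / 2"
    unfolding monopoly_price_plus_closed_form using diff_squares_div_alpha alpha_pos beta_pos beta_less_alpha
    by (simp add: field_simps)
  finally show ?thesis .
qed

end

locale ex_post_game = linear_demand +
  fixes \<gamma>1 \<gamma>2 pa1 pa2 :: real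
  assumes gamma1: "0 < \<gamma>1" "\<gamma>1 < 1" and gamma2: "0 < \<gamma>2" "\<gamma>2 < 1"
    and posdef: "posdef2 \<gamma>1 (- (\<beta> / \<alpha>) * (\<gamma>1 + \<gamma>2) / 2) \<gamma>2"
    and ad_revenues: "pa2 \<le> pa1" "0 \<le> pa2"
begin

lemma pa1_nonneg: "0 \<le> pa1"
  using ad_revenues by linarith

lemma price_equilibrium_at_monopoly_price:
  assumes entry: "choke_price (monopoly_price pa1) + pa2 \<le> 0"
    and rival: "choke_price (monopoly_price pa1) \<le> p2"
  shows "price_equilibrium \<gamma>1 \<gamma>2 pa1 pa2 (monopoly_price pa1) p2"
proof -
  let ?P = "monopoly_price pa1"
  have capacity: "(\<alpha> - \<beta>) * ?P < D0"
    by (rule monopoly_price_below_capacity[OF pa1_nonneg])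
  have payoff_at: "isp_payoff \<gamma>1 \<gamma>2 pa1 pa2 ?P p2 = \<gamma>1 * monopoly_revenue pa1 ?P"
    by (rule isp_payoff_monopoly1[OF capacity rival])
  have "isp_payoff \<gamma>1 \<gamma>2 pa1 pa2 q1 q2 \<le> \<gamma>1 * monopoly_revenue pa1 ?P" for q1 q2
    using isp_payoff_zero_or_shared[of \<gamma>1 \<gamma>2 pa1 pa2 q1 q2]
      shared_isp_payoff_le_at_monopoly[OF gamma1(1) gamma2(1) posdef pa1_nonneg entry]
      shared_isp_payoff_at_choke[of \<gamma>1 \<gamma>2 pa1 pa2 ?P] monopoly_revenue_max_nonneg[of pa1] gamma1(1)
    by auto
  moreover have "d1 q p2 * (q + pa1) \<le> d1 ?P p2 * (?P + pa1)" for q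
    using revenue1_le_monopoly_max[of q p2 pa1] demand1_monopoly[OF capacity] rival
    by (simp add: choke_price_le_iff monopoly_revenue_def)
  moreover have "d2 ?P q * (q + pa2) \<le> d2 ?P p2 * (p2 + pa2)" for q
  proof (cases "0 < d2 ?P q")
    case True
    then have "q + pa2 < 0"
      using demand1_pos_imp_below_choke[of q ?P] entry
      by (simp add: demand2_eq_demand1 flip: less_choke_price_iff)
    then show ?thesis
      using True rival demand1_zero_above_choke[of ?P p2]
      by (simp add: demand2_eq_demand1 choke_price_le_iff mult_pos_neg less_imp_le)
  next
    case False
    then show ?thesis
      using rival demand1_nonneg[of q ?P] demand1_zero_above_choke[of ?P p2]
      by (simp add: demand2_eq_demand1 choke_price_le_iff)
  qed
  ultimately show ?thesis
    by (simp add: price_equilibrium_def payoff_at)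
qed

lemma price_equilibrium_iff:
  "price_equilibrium \<gamma>1 \<gamma>2 pa1 pa2 p1 p2 \<longleftrightarrow>
   p1 = monopoly_price pa1 \<and> choke_price p1 \<le> p2 \<and> choke_price p1 + pa2 \<le> 0"
proof
  assume eq: "price_equilibrium \<gamma>1 \<gamma>2 pa1 pa2 p1 p2"
  show "p1 = monopoly_price pa1 \<and> choke_price p1 \<le> p2 \<and> choke_price p1 + pa2 \<le> 0"
  proof (cases rule: demand_regions[of p1 p2])
    case shared
    then show ?thesis
      using no_price_equilibrium_shared[OF eq gamma2(1)] by blast
  next
    case monopoly1
    then show ?thesis
      using price_equilibrium_monopoly1[OF eq gamma1(1) pa1_nonneg] by blast
  next
    case monopoly2
    \<comment> \<open>By symmetry CP 2 would then sit at its own monopoly price, and CP 1, whose advertising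
        revenue is at least as large, could enter profitably.\<close>
    then have "choke_price (monopoly_price pa2) + pa1 \<le> 0"
      using price_equilibrium_monopoly1[OF price_equilibrium_swap[OF eq] gamma2(1) ad_revenues(2)]
      by auto
    then show ?thesis
      using choke_monopoly_price_plus_pos[OF ad_revenues(2)] ad_revenues(1) by linarith
  next
    case none
    then show ?thesis
      using price_equilibrium_isp_payoff_ge[OF eq pa1_nonneg]
        mult_pos_pos[OF gamma1(1) monopoly_revenue_max_pos[OF pa1_nonneg]]
      by (simp add: isp_payoff_def)
  qed
next
  show "p1 = monopoly_price pa1 \<and> choke_price p1 \<le> p2 \<and> choke_price p1 + pa2 \<le> 0 \<Longrightarrow>
        price_equilibrium \<gamma>1 \<gamma>2 pa1 pa2 p1 p2"
    using price_equilibrium_at_monopoly_price by blast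
qed

lemma is_NE_iff:
  "is_NE D0 \<alpha> \<beta> \<gamma>1 \<gamma>2 pa1 pa2 ps1 ps2 pc1 pc2 \<longleftrightarrow>
   ps1 + pc1 = monopoly_price pa1 \<and> choke_price (monopoly_price pa1) \<le> ps2 + pc2 \<and>
   choke_price (monopoly_price pa1) + pa2 \<le> 0"
  by (auto simp: is_NE_iff_price_equilibrium[OF gamma1(2) gamma2(2)] price_equilibrium_iff)

lemma ex_is_NE_iff:
  "(\<exists>ps1 ps2 pc1 pc2. is_NE D0 \<alpha> \<beta> \<gamma>1 \<gamma>2 pa1 pa2 ps1 ps2 pc1 pc2) \<longleftrightarrow>
   choke_price (monopoly_price pa1) + pa2 \<le> 0"
proof
  assume "choke_price (monopoly_price pa1) + pa2 \<le> 0"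
  then have "is_NE D0 \<alpha> \<beta> \<gamma>1 \<gamma>2 pa1 pa2 (monopoly_price pa1) (choke_price (monopoly_price pa1)) 0 0"
    by (simp add: is_NE_iff)
  then show "\<exists>ps1 ps2 pc1 pc2. is_NE D0 \<alpha> \<beta> \<gamma>1 \<gamma>2 pa1 pa2 ps1 ps2 pc1 pc2"
    by blast
qed (auto simp: is_NE_iff)

lemma demands_at_monopoly_price:
  "choke_price (monopoly_price pa1) \<le> p2 \<Longrightarrow>
   d1 (monopoly_price pa1) p2 = monopoly_demand (monopoly_price pa1) \<and> d2 (monopoly_price pa1) p2 = 0"
  using monopoly_price_below_capacity[OF pa1_nonneg]
  by (simp add: demand1_monopoly demand2_eq_demand1 demand1_zero_above_choke choke_price_le_iff)

lemma monopoly_demand_at_monopoly_price_pos: "0 < monopoly_demand (monopoly_price pa1)"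
  using monopoly_price_below_capacity[OF pa1_nonneg] by (simp add: monopoly_demand_pos_iff)

end

theorem theorem4:
  fixes D0 \<alpha> \<beta> \<gamma>1 \<gamma>2 pa1 pa2 :: real
  assumes "D0 > 0" and "\<alpha> > \<beta>" and "\<beta> > 0"
    and "0 < \<gamma>1" and "\<gamma>1 < 1" and "0 < \<gamma>2" and "\<gamma>2 < 1"
    and "posdef2 \<gamma>1 (- (\<beta> / \<alpha>) * (\<gamma>1 + \<gamma>2) / 2) \<gamma>2"
    and "pa1 \<ge> pa2" and "pa2 \<ge> 0"
  defines "D0' \<equiv> D0 * (\<alpha> + \<beta>) / \<alpha>"
    and "\<alpha>' \<equiv> (\<alpha>^2 - \<beta>^2) / \<alpha>"
  shows
    "(pa1 \<ge> (2 * \<alpha> / \<beta>) * pa2 + (2 * \<alpha> - \<beta>) * D0 / (\<beta> * (\<alpha> - \<beta>)) \<longrightarrow>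
        (\<exists>ps1 ps2 pc1 pc2. is_NE D0 \<alpha> \<beta> \<gamma>1 \<gamma>2 pa1 pa2 ps1 ps2 pc1 pc2) \<and>
        (\<forall>ps1 ps2 pc1 pc2. is_NE D0 \<alpha> \<beta> \<gamma>1 \<gamma>2 pa1 pa2 ps1 ps2 pc1 pc2 \<longrightarrow>
           demand1 D0 \<alpha> \<beta> (ps1 + pc1) (ps2 + pc2) > 0 \<and>
           demand2 D0 \<alpha> \<beta> (ps1 + pc1) (ps2 + pc2) = 0 \<and>
           ps1 + pc1 = (D0' - \<alpha>' * pa1) / (2 * \<alpha>') \<and>
           (\<forall>t. is_NE D0 \<alpha> \<beta> \<gamma>1 \<gamma>2 pa1 pa2 t ps2 (ps1 + pc1 - t) pc2) \<and>
           demand1 D0 \<alpha> \<beta> (ps1 + pc1) (ps2 + pc2) = (D0' + \<alpha>' * pa1) / 2 \<and>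
           ps1 + pc1 + pa1 = (D0' + \<alpha>' * pa1) / (2 * \<alpha>') \<and>
           U_ISP D0 \<alpha> \<beta> \<gamma>1 \<gamma>2 pa1 pa2 ps1 ps2 pc1 pc2
             = \<gamma>1 * (demand1 D0 \<alpha> \<beta> (ps1 + pc1) (ps2 + pc2) * (ps1 + pc1 + pa1)) \<and>
           U_CP1 D0 \<alpha> \<beta> \<gamma>1 pa1 ps1 ps2 pc1 pc2
             = (1 - \<gamma>1) * (demand1 D0 \<alpha> \<beta> (ps1 + pc1) (ps2 + pc2) * (ps1 + pc1 + pa1))))
     \<and>
     (\<not> (pa1 \<ge> (2 * \<alpha> / \<beta>) * pa2 + (2 * \<alpha> - \<beta>) * D0 / (\<beta> * (\<alpha> - \<beta>))) \<longrightarrow>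
        \<not> (\<exists>ps1 ps2 pc1 pc2. is_NE D0 \<alpha> \<beta> \<gamma>1 \<gamma>2 pa1 pa2 ps1 ps2 pc1 pc2))"
proof -
  interpret ex_post_game D0 \<alpha> \<beta> \<gamma>1 \<gamma>2 pa1 pa2
    using assms(1-10) by unfold_locales
  show ?thesis
    unfolding D0'_def \<alpha>'_def entry_threshold_iff ex_is_NE_iff U_ISP_def U_CP1_def
      monopoly_price_closed_form[symmetric] monopoly_price_plus_closed_form[symmetric]
      monopoly_demand_at_monopoly_price[symmetric]
    using demands_at_monopoly_price monopoly_demand_at_monopoly_price_pos
    by (auto simp: is_NE_iff mult.assoc)
qed

end
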